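(* Let $k$ be a positive integer and $Y$ a finite set. The algebra $\mathbf A=Y^{[k]}$ is strongly abelian (i.e., the full relation $A\times A$ is a strongly abelian congruence) and $c_{\mathbf A}(n)\le |Y|^{n^{1/k}}$ for every $n$.
   Context: Fix the signature consisting of a unary symbol $s$ and a $k$-ary symbol $d$. For a set $Y$, $Y^{[k]}$ is the algebra with universe $Y^k$ and operations $s((y_1,y_2,\dots,y_k))=(y_2,\dots,y_k,y_1)$ and $d((y^1_1,\dots,y^1_k),\dots,(y^k_1,\dots,y^k_k))=(y^1_1,y^2_2,\dots,y^k_k)$. For a finite algebra $\mathbf A$, $c_{\mathbf A}(n)$ is the maximum of $|\mathrm{Hom}(\mathbf X,\mathbf A)|$ over algebras $\mathbf X$ in the signature of $\mathbf A$ with at most $n$ elements. A congruence $\alpha$ of $\mathbf A$ is strongly abelian if for every $m\ge1$, every $m$-ary term operation $t$ of $\mathbf A$ and all $x_1,\dots,x_m,y_1,\dots,y_m,z_2,\dots,z_m\in A$ with $(x_i,y_i)\in\alpha$ for all $i$ and $(y_i,z_i)\in\alpha$ for $i\ge2$, $t(x_1,\dots,x_m)=t(y_1,\dots,y_m)$ implies $t(x_1,z_2,\dots,z_m)=t(y_1,z_2,\dots,z_m)$. *)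

theory Defs
  imports Main "HOL-Library.FuncSet" Complex_Main
begin

text \<open>Algebras in the signature consisting of a unary symbol s and a k-ary symbol d.
  The k-ary operation takes its arguments as a function nat => 'a, of which only
  the positions 0..<k matter.\<close>

record 'a alg =
  carrier :: "'a set"
  s_op :: "'a \<Rightarrow> 'a"
  d_op :: "(nat \<Rightarrow> 'a) \<Rightarrow> 'a"

definition algebra :: "nat \<Rightarrow> 'a alg \<Rightarrow> bool" where
  "algebra k X \<longleftrightarrow>
     (\<forall>x\<in>carrier X. s_op X x \<in> carrier X) \<and>
     (\<forall>a. (\<forall>i<k. a i \<in> carrier X) \<longrightarrow> d_op X a \<in> carrier X) \<and>
     (\<forall>a b. (\<forall>i<k. a i = b i) \<longrightarrow> d_op X a = d_op X b)"

definition power_alg :: "nat \<Rightarrow> 'y set \<Rightarrow> (nat \<Rightarrow> 'y) alg" where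
  "power_alg k Y = \<lparr> carrier = ({..<k} \<rightarrow>\<^sub>E Y),
     s_op = (\<lambda>y. \<lambda>i. if i < k then y ((i + 1) mod k) else undefined),
     d_op = (\<lambda>a. \<lambda>i. if i < k then a i i else undefined) \<rparr>"

definition hom :: "nat \<Rightarrow> 'a alg \<Rightarrow> 'b alg \<Rightarrow> ('a \<Rightarrow> 'b) set" where
  "hom k X A = {h. h \<in> carrier X \<rightarrow>\<^sub>E carrier A \<and>
     (\<forall>x\<in>carrier X. h (s_op X x) = s_op A (h x)) \<and>
     (\<forall>a. (\<forall>i<k. a i \<in> carrier X) \<longrightarrow> h (d_op X a) = d_op A (h \<circ> a))}"

text \<open>c_A(n): maximum of |Hom(X,A)| over (nonempty) algebras X with at most n elements.
  Up to isomorphism every such X has a carrier consisting of natural numbers.\<close>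

definition c_fun :: "nat \<Rightarrow> 'b alg \<Rightarrow> nat \<Rightarrow> nat" where
  "c_fun k A n = Sup {card (hom k X A) | X :: nat alg.
      algebra k X \<and> carrier X \<noteq> {} \<and> finite (carrier X) \<and> card (carrier X) \<le> n}"

datatype trm = Var nat | S trm | D "trm list"

fun wf_trm :: "nat \<Rightarrow> nat \<Rightarrow> trm \<Rightarrow> bool" where
  "wf_trm k m (Var i) = (i < m)"
| "wf_trm k m (S t) = wf_trm k m t"
| "wf_trm k m (D ts) = (length ts = k \<and> (\<forall>t\<in>set ts. wf_trm k m t))"

fun eval :: "'a alg \<Rightarrow> (nat \<Rightarrow> 'a) \<Rightarrow> trm \<Rightarrow> 'a" where
  "eval A e (Var i) = e i"
| "eval A e (S t) = s_op A (eval A e t)"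
| "eval A e (D ts) = (let vs = map (eval A e) ts in d_op A (\<lambda>i. vs ! i))"

definition congruence :: "nat \<Rightarrow> 'a alg \<Rightarrow> ('a \<times> 'a) set \<Rightarrow> bool" where
  "congruence k A \<alpha> \<longleftrightarrow> equiv (carrier A) \<alpha> \<and>
     (\<forall>x y. (x, y) \<in> \<alpha> \<longrightarrow> (s_op A x, s_op A y) \<in> \<alpha>) \<and>
     (\<forall>a b. (\<forall>i<k. (a i, b i) \<in> \<alpha>) \<longrightarrow> (d_op A a, d_op A b) \<in> \<alpha>)"

definition strongly_abelian :: "nat \<Rightarrow> 'a alg \<Rightarrow> ('a \<times> 'a) set \<Rightarrow> bool" where
  "strongly_abelian k A \<alpha> \<longleftrightarrow> congruence k A \<alpha> \<and>
     (\<forall>m t x y z. m \<ge> 1 \<longrightarrow> wf_trm k m t \<longrightarrow>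
        (\<forall>i<m. x i \<in> carrier A \<and> y i \<in> carrier A \<and> z i \<in> carrier A) \<longrightarrow>
        (\<forall>i<m. (x i, y i) \<in> \<alpha>) \<longrightarrow>
        (\<forall>i. 1 \<le> i \<and> i < m \<longrightarrow> (y i, z i) \<in> \<alpha>) \<longrightarrow>
        eval A x t = eval A y t \<longrightarrow>
        eval A (\<lambda>i. if i = 0 then x 0 else z i) t = eval A (\<lambda>i. if i = 0 then y 0 else z i) t)"

end

theory Submission
  imports Defs
begin

(* Coordinate i of a term operation of Y^[k] is a single coordinate of a single argument, so
   strong abelianness is immediate.  For the bound, a homomorphism h : X \<rightarrow> Y^[k] is determined by
   x \<mapsto> h x 0, since h x i = h (s^i x) 0.  Grouping the elements of X by their "profile"
   h \<mapsto> h x 0 on Hom(X, Y^[k]) into c classes gives |Hom(X, Y^[k])| \<le> |Y|^c.  Conversely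
   h (s^i (d(s^k y_0, s^(k-1) y_1, ..., s y_(k-1)))) 0 = h y_i 0, so x \<mapsto> (profile of s^i x)_(i<k)
   maps X onto the k-tuples of profiles and c^k \<le> |X|. *)

lemma carrier_power_alg: "carrier (power_alg k Y) = {..<k} \<rightarrow>\<^sub>E Y"
  by (simp add: power_alg_def)

lemma s_op_power_alg:
  "s_op (power_alg k Y) y = (\<lambda>i. if i < k then y ((i + 1) mod k) else undefined)"
  by (simp add: power_alg_def)

lemma d_op_power_alg: "d_op (power_alg k Y) a = (\<lambda>i. if i < k then a i i else undefined)"
  by (simp add: power_alg_def)

lemmas power_alg_simps = carrier_power_alg s_op_power_alg d_op_power_alg

lemma algebra_power_alg: "algebra k (power_alg k Y)"
  unfolding algebra_def power_alg_simps by (auto simp: PiE_iff extensional_def)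

lemma congruence_full: "algebra k A \<Longrightarrow> congruence k A (carrier A \<times> carrier A)"
  unfolding congruence_def algebra_def by (simp add: equiv_def refl_on_def sym_def trans_def)

lemma eval_in_carrier:
  assumes "algebra k A" "wf_trm k m t" "\<And>i. i < m \<Longrightarrow> e i \<in> carrier A"
  shows "eval A e t \<in> carrier A"
  using assms(2)
proof (induction t)
  case (D ts)
  then show ?case
    using assms(1) unfolding algebra_def by (auto simp: Let_def)
qed (use assms in \<open>auto simp: algebra_def\<close>)

function coord_source :: "nat \<Rightarrow> trm \<Rightarrow> nat \<Rightarrow> nat \<times> nat" where
  "coord_source k (Var l) i = (l, i)"
| "coord_source k (S t) i = coord_source k t ((i + 1) mod k)"
| "coord_source k (D ts) i = (if i < length ts then coord_source k (ts ! i) i else (0, 0))"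
  by pat_completeness auto
termination
  by (relation "measure (size \<circ> fst \<circ> snd)")
    (auto intro!: le_imp_less_Suc size_list_estimation'[OF nth_mem])

lemma eval_power_alg_coord:
  assumes "wf_trm k m t" "i < k"
  shows "eval (power_alg k Y) e t i = case_prod e (coord_source k t i)"
  using assms
proof (induction t arbitrary: i)
  case (D ts)
  then have "ts ! i \<in> set ts" by simp
  with D show ?case by (simp add: d_op_power_alg Let_def)
qed (simp_all add: s_op_power_alg)

lemma strongly_abelian_power_alg:
  "strongly_abelian k (power_alg k Y) (carrier (power_alg k Y) \<times> carrier (power_alg k Y))"
  unfolding strongly_abelian_def
proof (intro conjI allI impI)
  show "congruence k (power_alg k Y) (carrier (power_alg k Y) \<times> carrier (power_alg k Y))"
    by (rule congruence_full[OF algebra_power_alg])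
next
  fix m t x y z
  assume "m \<ge> 1" and wf: "wf_trm k m t"
    and carrier: "\<forall>i<m. x i \<in> carrier (power_alg k Y) \<and> y i \<in> carrier (power_alg k Y)
      \<and> z i \<in> carrier (power_alg k Y)"
    and eq: "eval (power_alg k Y) x t = eval (power_alg k Y) y t"
  define x' where "x' = (\<lambda>i. if i = 0 then x 0 else z i)"
  define y' where "y' = (\<lambda>i. if i = 0 then y 0 else z i)"
  have coords_eq: "eval (power_alg k Y) x' t i = eval (power_alg k Y) y' t i" if "i < k" for i
  proof -
    obtain l j where "coord_source k t i = (l, j)" by fastforce
    then have coord: "eval (power_alg k Y) e t i = e l j" for e
      using eval_power_alg_coord[OF wf \<open>i < k\<close>] by simp
    have "x l j = y l j"
      using fun_cong[OF eq, of i] unfolding coord .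
    then show ?thesis
      unfolding coord by (auto simp: x'_def y'_def)
  qed
  have x'_in: "eval (power_alg k Y) x' t \<in> carrier (power_alg k Y)"
    using carrier \<open>m \<ge> 1\<close> by (intro eval_in_carrier[OF algebra_power_alg wf]) (simp add: x'_def)
  have y'_in: "eval (power_alg k Y) y' t \<in> carrier (power_alg k Y)"
    using carrier \<open>m \<ge> 1\<close> by (intro eval_in_carrier[OF algebra_power_alg wf]) (simp add: y'_def)
  show "eval (power_alg k Y) x' t = eval (power_alg k Y) y' t"
    using x'_in y'_in unfolding carrier_power_alg by (rule PiE_ext) (simp add: coords_eq)
qed

lemma hom_in_PiE: "h \<in> hom k X A \<Longrightarrow> h \<in> carrier X \<rightarrow>\<^sub>E carrier A"
  by (simp add: hom_def)

lemma hom_in_carrier: "h \<in> hom k X A \<Longrightarrow> x \<in> carrier X \<Longrightarrow> h x \<in> carrier A"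
  by (rule PiE_mem[OF hom_in_PiE])

lemma d_op_in_carrier:
  "algebra k X \<Longrightarrow> (\<And>i. i < k \<Longrightarrow> a i \<in> carrier X) \<Longrightarrow> d_op X a \<in> carrier X"
  by (simp add: algebra_def)

lemma funpow_s_op_in_carrier:
  "algebra k X \<Longrightarrow> x \<in> carrier X \<Longrightarrow> (s_op X ^^ j) x \<in> carrier X"
  by (induction j) (auto simp: algebra_def)

lemma hom_power_alg_funpow_s_op:
  assumes alg: "algebra k X" and h: "h \<in> hom k X (power_alg k Y)" and x: "x \<in> carrier X"
    and "i < k"
  shows "h ((s_op X ^^ j) x) i = h x ((i + j) mod k)"
  using \<open>i < k\<close>
proof (induction j arbitrary: i)
  case (Suc j)
  have "h ((s_op X ^^ Suc j) x) i = s_op (power_alg k Y) (h ((s_op X ^^ j) x)) i"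
    using h funpow_s_op_in_carrier[OF alg x] by (simp add: hom_def)
  also have "\<dots> = h ((s_op X ^^ j) x) ((i + 1) mod k)"
    using Suc.prems by (simp add: s_op_power_alg)
  also have "\<dots> = h x (((i + 1) mod k + j) mod k)"
    using Suc by simp
  also have "\<dots> = h x ((i + Suc j) mod k)"
    by (simp add: mod_add_left_eq)
  finally show ?case .
qed simp

lemma hom_power_alg_coord_eq:
  assumes "algebra k X" "h \<in> hom k X (power_alg k Y)" "x \<in> carrier X" "i < k"
  shows "h x i = h ((s_op X ^^ i) x) 0"
  using hom_power_alg_funpow_s_op[OF assms(1-3), of 0 i] assms(4) by simp

lemma hom_power_alg_eqI:
  assumes alg: "algebra k X"
    and h: "h \<in> hom k X (power_alg k Y)" and h': "h' \<in> hom k X (power_alg k Y)"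
    and coord0: "\<And>x. x \<in> carrier X \<Longrightarrow> h x 0 = h' x 0"
  shows "h = h'"
proof
  fix x
  show "h x = h' x"
  proof (cases "x \<in> carrier X")
    case True
    have coords_eq: "h x i = h' x i" if "i < k" for i
      using hom_power_alg_coord_eq[OF alg h True that] hom_power_alg_coord_eq[OF alg h' True that]
        coord0[OF funpow_s_op_in_carrier[OF alg True]]
      by simp
    have "h x \<in> {..<k} \<rightarrow>\<^sub>E Y" and "h' x \<in> {..<k} \<rightarrow>\<^sub>E Y"
      using hom_in_carrier[OF h True] hom_in_carrier[OF h' True] unfolding carrier_power_alg .
    then show ?thesis
      by (rule PiE_ext) (simp add: coords_eq)
  next
    case False
    then show ?thesis
      using PiE_arb[OF hom_in_PiE[OF h]] PiE_arb[OF hom_in_PiE[OF h']] by simp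
  qed
qed

lemma hom_power_alg_diagonal:
  assumes alg: "algebra k X" and h: "h \<in> hom k X (power_alg k Y)"
    and y: "\<And>i. i < k \<Longrightarrow> y i \<in> carrier X" and "i < k"
  shows "h ((s_op X ^^ i) (d_op X (\<lambda>i. (s_op X ^^ (k - i)) (y i)))) 0 = h (y i) 0"
proof -
  define a where "a i = (s_op X ^^ (k - i)) (y i)" for i
  have a: "a i \<in> carrier X" if "i < k" for i
    using funpow_s_op_in_carrier[OF alg y[OF that]] by (simp add: a_def)
  then have "d_op X a \<in> carrier X"
    by (rule d_op_in_carrier[OF alg])
  then have "h ((s_op X ^^ i) (d_op X a)) 0 = h (d_op X a) i"
    using hom_power_alg_coord_eq[OF alg h _ \<open>i < k\<close>] by simp
  also have "\<dots> = h (a i) i"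
    using h a \<open>i < k\<close> by (simp add: hom_def d_op_power_alg)
  also have "\<dots> = h (y i) ((i + (k - i)) mod k)"
    using hom_power_alg_funpow_s_op[OF alg h y \<open>i < k\<close>] \<open>i < k\<close> by (simp add: a_def)
  also have "\<dots> = h (y i) 0"
    using \<open>i < k\<close> by simp
  finally show ?thesis
    unfolding a_def .
qed

definition coord0_profile :: "nat \<Rightarrow> 'a alg \<Rightarrow> 'y set \<Rightarrow> 'a \<Rightarrow> ('a \<Rightarrow> nat \<Rightarrow> 'y) \<Rightarrow> 'y" where
  "coord0_profile k X Y x = (\<lambda>h\<in>hom k X (power_alg k Y). h x 0)"

lemma card_hom_power_alg_le_profiles:
  assumes "k \<ge> 1" "finite Y" "algebra k X" "finite (carrier X)"
  shows "card (hom k X (power_alg k Y)) \<le> card Y ^ card (coord0_profile k X Y ` carrier X)"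
proof -
  define H where "H = hom k X (power_alg k Y)"
  define C where "C = coord0_profile k X Y ` carrier X"
  have "inj_on (\<lambda>h. \<lambda>v\<in>C. v h) H"
  proof (rule inj_onI)
    fix h h' assume h: "h \<in> H" and h': "h' \<in> H" and eq: "(\<lambda>v\<in>C. v h) = (\<lambda>v\<in>C. v h')"
    have "h x 0 = h' x 0" if "x \<in> carrier X" for x
    proof -
      have "coord0_profile k X Y x h = coord0_profile k X Y x h'"
        using fun_cong[OF eq, of "coord0_profile k X Y x"] that by (simp add: C_def)
      with h h' show ?thesis
        by (simp add: coord0_profile_def H_def)
    qed
    with h h' show "h = h'"
      unfolding H_def using hom_power_alg_eqI[OF \<open>algebra k X\<close>] by blast
  qed
  moreover have "(\<lambda>h. \<lambda>v\<in>C. v h) ` H \<subseteq> C \<rightarrow>\<^sub>E Y"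
  proof -
    have "h x 0 \<in> Y" if "h \<in> H" "x \<in> carrier X" for h x
    proof -
      have "h x \<in> {..<k} \<rightarrow>\<^sub>E Y"
        using hom_in_carrier[of h k X "power_alg k Y" x] that unfolding H_def carrier_power_alg by blast
      then show ?thesis
        using PiE_mem[of "h x" "{..<k}" "\<lambda>_. Y" 0] \<open>k \<ge> 1\<close> by simp
    qed
    then show ?thesis
      by (auto simp: C_def coord0_profile_def H_def)
  qed
  moreover have "finite C"
    using \<open>finite (carrier X)\<close> by (simp add: C_def)
  ultimately have "card H \<le> card (C \<rightarrow>\<^sub>E Y)"
    using \<open>finite Y\<close> by (intro card_inj_on_le) (auto intro: finite_PiE)
  also have "\<dots> = card Y ^ card C"
    using \<open>finite C\<close> by (simp add: card_PiE)
  finally show ?thesis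
    by (simp add: H_def C_def)
qed

lemma card_profiles_power_le:
  assumes alg: "algebra k X" and fin: "finite (carrier X)"
  shows "card (coord0_profile k X Y ` carrier X) ^ k \<le> card (carrier X)"
proof -
  define C where "C = coord0_profile k X Y ` carrier X"
  define g where "g x = (\<lambda>i\<in>{..<k}. coord0_profile k X Y ((s_op X ^^ i) x))" for x
  have "{..<k} \<rightarrow>\<^sub>E C \<subseteq> g ` carrier X"
  proof
    fix v assume v: "v \<in> {..<k} \<rightarrow>\<^sub>E C"
    define y where "y i = inv_into (carrier X) (coord0_profile k X Y) (v i)" for i
    have v_img: "v i \<in> coord0_profile k X Y ` carrier X" if "i < k" for i
      using PiE_mem[OF v] that unfolding C_def by simp
    have y: "y i \<in> carrier X" if "i < k" for i
      using inv_into_into[OF v_img[OF that]] by (simp add: y_def)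
    have v_eq: "v i = coord0_profile k X Y (y i)" if "i < k" for i
      using f_inv_into_f[OF v_img[OF that]] by (simp add: y_def)
    define x where "x = d_op X (\<lambda>i. (s_op X ^^ (k - i)) (y i))"
    have "x \<in> carrier X"
      unfolding x_def using y by (intro d_op_in_carrier[OF alg] funpow_s_op_in_carrier[OF alg])
    moreover have "g x = v"
    proof
      fix i
      show "g x i = v i"
      proof (cases "i < k")
        case True
        have "coord0_profile k X Y ((s_op X ^^ i) x) = coord0_profile k X Y (y i)"
          unfolding coord0_profile_def x_def
          using hom_power_alg_diagonal[where y = y, OF alg _ y True] by (intro restrict_ext) simp
        then show ?thesis
          using True v_eq by (simp add: g_def)
      next
        case False
        then show ?thesis
          using PiE_arb[OF v, of i] by (simp add: g_def)
      qed
    qed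
    ultimately show "v \<in> g ` carrier X"
      by blast
  qed
  then have "card ({..<k} \<rightarrow>\<^sub>E C) \<le> card (carrier X)"
    using fin by (rule surj_card_le[rotated])
  moreover have "finite C"
    using fin by (simp add: C_def)
  ultimately show ?thesis
    by (simp add: card_PiE C_def)
qed

lemma real_le_powr_inverse_if_power_le:
  fixes c n k :: nat
  assumes "c ^ k \<le> n" "k \<ge> 1"
  shows "real c \<le> real n powr (1 / real k)"
proof -
  have "real c = root k (real c ^ k)"
    using assms(2) by (simp add: real_root_power_cancel)
  also have "\<dots> \<le> root k (real n)"
    using assms by (simp flip: of_nat_power)
  also have "\<dots> = real n powr (1 / real k)"
    using assms(2) by (simp add: root_powr_inverse)
  finally show ?thesis .
qed

lemma card_hom_power_alg_le:
  assumes "k \<ge> 1" "finite Y" "algebra k X" "carrier X \<noteq> {}" "finite (carrier X)"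
    and "card (carrier X) \<le> n"
  shows "real (card (hom k X (power_alg k Y))) \<le> real (card Y) powr (real n powr (1 / real k))"
proof -
  define c where "c = card (coord0_profile k X Y ` carrier X)"
  have hom_le: "card (hom k X (power_alg k Y)) \<le> card Y ^ c"
    unfolding c_def using card_hom_power_alg_le_profiles assms(1-3,5) .
  have "c ^ k \<le> n"
    unfolding c_def using card_profiles_power_le[OF assms(3,5), of Y] assms(6) by linarith
  then have c_le: "real c \<le> real n powr (1 / real k)"
    using assms(1) by (rule real_le_powr_inverse_if_power_le)
  show ?thesis
  proof (cases "card Y = 0")
    case True
    have "c > 0"
      using assms(4,5) by (simp add: c_def card_gt_0_iff)
    with True hom_le show ?thesis
      by (simp add: zero_power)
  next
    case False
    have "real (card (hom k X (power_alg k Y))) \<le> real (card Y) ^ c"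
      using hom_le by (simp flip: of_nat_power)
    also have "\<dots> = real (card Y) powr real c"
      using False by (simp add: powr_realpow)
    also have "\<dots> \<le> real (card Y) powr (real n powr (1 / real k))"
      using False c_le by (intro powr_mono) auto
    finally show ?thesis .
  qed
qed

lemma real_Sup_nat_le:
  fixes S :: "nat set"
  assumes "\<And>m. m \<in> S \<Longrightarrow> real m \<le> B" "0 \<le> B"
  shows "real (Sup S) \<le> B"
proof (cases "S = {}")
  case True
  then show ?thesis
    using assms(2) by (simp add: Sup_nat_def)
next
  case False
  have "Sup S \<le> nat \<lfloor>B\<rfloor>"
    using assms(1) by (intro cSup_least[OF False]) (simp add: le_nat_floor)
  then have "real (Sup S) \<le> real (nat \<lfloor>B\<rfloor>)"
    by simp
  also have "\<dots> \<le> B"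
    using assms(2) by simp
  finally show ?thesis .
qed

theorem corollary3p8:
  fixes k :: nat and Y :: "'y set"
  assumes "k \<ge> 1" and "finite Y"
  shows "strongly_abelian k (power_alg k Y)
           (carrier (power_alg k Y) \<times> carrier (power_alg k Y))
       \<and> (\<forall>n. real (c_fun k (power_alg k Y) n) \<le> real (card Y) powr (real n powr (1 / real k)))"
proof (intro conjI allI)
  show "strongly_abelian k (power_alg k Y) (carrier (power_alg k Y) \<times> carrier (power_alg k Y))"
    by (rule strongly_abelian_power_alg)
next
  fix n
  show "real (c_fun k (power_alg k Y) n) \<le> real (card Y) powr (real n powr (1 / real k))"
    unfolding c_fun_def
    by (rule real_Sup_nat_le) (auto intro: card_hom_power_alg_le[OF assms])
qed

end
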